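(* For every finite simple digraph $G$, ${\sf dtw}(G) \leq {\sf circ}(G) + 1$, where ${\sf dtw}(G)$ is the directed treewidth of $G$ and ${\sf circ}(G)$ is its circumference.
   Context: All digraphs are finite and simple (no loops, no multiple arcs). The circumference ${\sf circ}(G)$ of a digraph $G$ is the length (number of arcs) of a longest simple directed cycle in $G$; if $G$ is acyclic (a DAG), ${\sf circ}(G)$ is defined to be $1$. An arborescence is a DAG $T$ with a unique root $r$ (node with no incoming arcs) such that for every node $i$ there is a unique directed walk from $r$ to $i$. For distinct nodes $i,j$ of $T$ write $i \prec j$ if there is a directed walk in $T$ from $i$ to $j$, and $i \preceq j$ if $i=j$ or $i\prec j$. For an arc $e=(i,j)$ of $T$ and a node $k$, write $e \prec k$ if $j=k$ or $j \prec k$; write $e \sim i$ if $e$ is incident with $i$. Given sets $W_i$ for nodes $i$, let $W_{\succ e}=\bigcup_{k: e\prec k} W_k$; given sets $A_e$ for arcs $e$, let $A_{\sim i}=\bigcup_{e\sim i}A_e$. For $W,X\subseteq V(G)$, $W$ is $X$-normal if $W\cap X=\emptyset$ and there is no directed path in $G\setminus X$ (the subdigraph induced by $V(G)\setminus X$) whose first and last vertices are in $W$ and which uses a vertex outside $W\cup X$. An arboreal decomposition of $G$ is a triple $(T,(W_i)_{i\in V(T)},(A_e)_{e\in E(T)})$ where $T$ is an arborescence, the $W_i$ and $A_e$ are subsets of $V(G)$, $(W_i)_{i\in V(T)}$ is a partition of $V(G)$, and for each arc $e$ of $T$, $W_{\succ e}$ is $A_e$-normal. Its width is $\max_{i\in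 V(T)}|W_i\cup A_{\sim i}|-1$, and the directed treewidth ${\sf dtw}(G)$ is the minimum width of an arboreal decomposition of $G$. *)

theory Defs
  imports Main
begin

text \<open>A digraph is given by a vertex set V and an arc relation E.
  Finite simple: V finite, arcs between vertices of V, no loops
  (multiple arcs are impossible in a relation).\<close>

definition simple_digraph :: "'a set \<Rightarrow> ('a \<times> 'a) set \<Rightarrow> bool" where
  "simple_digraph V E \<longleftrightarrow> finite V \<and> E \<subseteq> V \<times> V \<and> (\<forall>v. (v, v) \<notin> E)"

definition dicycle :: "('a \<times> 'a) set \<Rightarrow> 'a list \<Rightarrow> bool" where
  "dicycle E c \<longleftrightarrow> c \<noteq> [] \<and> distinct c \<and>
     (\<forall>i < length c. (c ! i, c ! ((i + 1) mod length c)) \<in> E)"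

definition circ :: "('a \<times> 'a) set \<Rightarrow> nat" where
  "circ E = (if \<exists>c. dicycle E c then Max {length c | c. dicycle E c} else 1)"

definition dipath :: "('a \<times> 'a) set \<Rightarrow> 'a list \<Rightarrow> bool" where
  "dipath E p \<longleftrightarrow> p \<noteq> [] \<and> distinct p \<and>
     (\<forall>i. Suc i < length p \<longrightarrow> (p ! i, p ! Suc i) \<in> E)"

text \<open>W is X-normal in G = (V,E).  Paths in G \ X are paths of G all of whose
  vertices lie in V - X.\<close>

definition normal :: "'a set \<Rightarrow> ('a \<times> 'a) set \<Rightarrow> 'a set \<Rightarrow> 'a set \<Rightarrow> bool" where
  "normal V E X W \<longleftrightarrow> W \<inter> X = {} \<and>
     \<not> (\<exists>p. dipath E p \<and> set p \<subseteq> V - X \<and> hd p \<in> W \<and> last p \<in> W \<and>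
            (\<exists>v\<in>set p. v \<notin> W \<union> X))"

definition diwalk :: "('b \<times> 'b) set \<Rightarrow> 'b list \<Rightarrow> bool" where
  "diwalk F p \<longleftrightarrow> p \<noteq> [] \<and> (\<forall>i. Suc i < length p \<longrightarrow> (p ! i, p ! Suc i) \<in> F)"

definition arborescence :: "'b set \<Rightarrow> ('b \<times> 'b) set \<Rightarrow> 'b \<Rightarrow> bool" where
  "arborescence N F r \<longleftrightarrow> finite N \<and> F \<subseteq> N \<times> N \<and> acyclic F \<and> r \<in> N \<and>
     {i \<in> N. \<forall>j. (j, i) \<notin> F} = {r} \<and>
     (\<forall>i\<in>N. \<exists>!p. diwalk F p \<and> hd p = r \<and> last p = i)"

text \<open>W_{>e}: union of the bags W_k over nodes k with e \<prec> k, i.e. k equal to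
  the head of e or reachable from it.\<close>

definition W_succ :: "'b set \<Rightarrow> ('b \<times> 'b) set \<Rightarrow> ('b \<Rightarrow> 'a set) \<Rightarrow> 'b \<times> 'b \<Rightarrow> 'a set" where
  "W_succ N F W e = (\<Union>k \<in> {k \<in> N. k = snd e \<or> (snd e, k) \<in> F\<^sup>+}. W k)"

definition A_sim :: "('b \<times> 'b) set \<Rightarrow> ('b \<times> 'b \<Rightarrow> 'a set) \<Rightarrow> 'b \<Rightarrow> 'a set" where
  "A_sim F A i = (\<Union>e \<in> {e \<in> F. fst e = i \<or> snd e = i}. A e)"

definition arboreal_decomposition ::
  "'a set \<Rightarrow> ('a \<times> 'a) set \<Rightarrow> 'b set \<Rightarrow> ('b \<times> 'b) set \<Rightarrow> 'b \<Rightarrow>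
   ('b \<Rightarrow> 'a set) \<Rightarrow> ('b \<times> 'b \<Rightarrow> 'a set) \<Rightarrow> bool" where
  "arboreal_decomposition V E N F r W A \<longleftrightarrow>
     arborescence N F r \<and>
     (\<forall>i\<in>N. W i \<noteq> {} \<and> W i \<subseteq> V) \<and>
     (\<forall>i\<in>N. \<forall>j\<in>N. i \<noteq> j \<longrightarrow> W i \<inter> W j = {}) \<and>
     (\<Union>i\<in>N. W i) = V \<and>
     (\<forall>e\<in>F. A e \<subseteq> V) \<and>
     (\<forall>e\<in>F. normal V E (A e) (W_succ N F W e))"

definition decomp_width :: "'b set \<Rightarrow> ('b \<times> 'b) set \<Rightarrow> ('b \<Rightarrow> 'a set) \<Rightarrow> ('b \<times> 'b \<Rightarrow> 'a set) \<Rightarrow> nat" where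
  "decomp_width N F W A = Max {card (W i \<union> A_sim F A i) | i. i \<in> N} - 1"

text \<open>Directed treewidth: minimum width over all arboreal decompositions; the
  nodes of the arborescence are taken to be natural numbers (w.l.o.g., by relabelling).\<close>

definition dtw :: "'a set \<Rightarrow> ('a \<times> 'a) set \<Rightarrow> nat" where
  "dtw V E = (LEAST w. \<exists>(N :: nat set) F r W A.
      arboreal_decomposition V E N F r W A \<and> decomp_width N F W A = w)"

end

theory Submission
  imports Defs
begin

text \<open>Hang the roots of a depth-first search forest of G below the first vertex discovered.
  This arborescence, with singleton bags, is the decomposition tree, and the arc into c is
  guarded by the circ(G) - 1 nearest proper ancestors of c. A path that starts and ends in the
  subtree of c but leaves it jumps to a vertex discovered before c, and by the properties of
  depth-first search it can only return to the subtree through a proper ancestor a of c. The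
  tree path from a down to where the path left the subtree, followed by the path back to a, is a
  cycle; hence a is among the circ(G) - 1 nearest ancestors, so the path meets the guard. The bag
  of c together with the guards of the arcs at c lies in {c} \<union> guard c, which has at most
  circ(G) vertices.\<close>

section \<open>Paths and cycles\<close>

abbreviation arcs :: "('a \<times> 'a) set \<Rightarrow> 'a list \<Rightarrow> bool" where
  "arcs E xs \<equiv> successively (\<lambda>x y. (x, y) \<in> E) xs"

lemma dipath_iff: "dipath E p \<longleftrightarrow> p \<noteq> [] \<and> distinct p \<and> arcs E p"
  unfolding dipath_def successively_conv_nth by blast

lemma diwalk_iff: "diwalk F p \<longleftrightarrow> p \<noteq> [] \<and> arcs F p"
  unfolding diwalk_def successively_conv_nth by blast

lemma arcs_set_subset:
  assumes "arcs F p" "F \<subseteq> N \<times> N" "p \<noteq> []" "hd p \<in> N"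
  shows "set p \<subseteq> N"
  using assms
proof (induction p)
  case (Cons x p)
  thus ?case by (cases p) (auto simp: successively_Cons)
qed simp

lemma dicycleI:
  assumes "p \<noteq> []" "distinct p" "arcs E p" "(last p, hd p) \<in> E"
  shows "dicycle E p"
  unfolding dicycle_def
proof (intro conjI allI impI)
  fix i assume i: "i < length p"
  show "(p ! i, p ! ((i + 1) mod length p)) \<in> E"
  proof (cases "Suc i < length p")
    case True
    thus ?thesis using successively_nth[OF assms(3) True] by simp
  next
    case False
    hence "i = length p - 1" using i by simp
    hence "p ! i = last p" "(i + 1) mod length p = 0" using assms(1) i
      by (auto simp: last_conv_nth)
    thus ?thesis using assms(1,4) by (simp add: hd_conv_nth)
  qed
qed (use assms in auto)

lemma length_dicycle_le_card:
  assumes "simple_digraph V E" "dicycle E c"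
  shows "length c \<le> card V"
proof -
  have "set c \<subseteq> V"
  proof
    fix x assume "x \<in> set c"
    then obtain i where "i < length c" "x = c ! i" by (auto simp: in_set_conv_nth)
    hence "(x, c ! ((i + 1) mod length c)) \<in> E" using assms(2) by (auto simp: dicycle_def)
    thus "x \<in> V" using assms(1) by (auto simp: simple_digraph_def)
  qed
  hence "card (set c) \<le> card V" using assms(1) card_mono by (auto simp: simple_digraph_def)
  thus ?thesis using assms(2) by (simp add: dicycle_def distinct_card)
qed

lemma length_dicycle_le_circ:
  assumes "simple_digraph V E" "dicycle E c"
  shows "length c \<le> circ E"
proof -
  have "finite {length c | c. dicycle E c}"
    by (rule finite_subset[of _ "{..card V}"]) (auto dest: length_dicycle_le_card[OF assms(1)])
  thus ?thesis unfolding circ_def using assms(2) by (auto intro: Max_ge)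
qed

lemma circ_pos:
  assumes "simple_digraph V E"
  shows "0 < circ E"
proof (cases "\<exists>c. dicycle E c")
  case True
  then obtain c where "dicycle E c" by blast
  hence "0 < length c" by (simp add: dicycle_def)
  thus ?thesis using length_dicycle_le_circ[OF assms \<open>dicycle E c\<close>] by linarith
qed (simp add: circ_def)

definition parent_arcs :: "('a \<Rightarrow> 'a option) \<Rightarrow> ('a \<times> 'a) set" where
  "parent_arcs par = {(x, y). par y = Some x}"

lemma parent_arcs_iff [simp]: "(x, y) \<in> parent_arcs par \<longleftrightarrow> par y = Some x"
  by (simp add: parent_arcs_def)

lemma parent_arcs_relpow_unique:
  "(a, c) \<in> parent_arcs par ^^ j \<Longrightarrow> (b, c) \<in> parent_arcs par ^^ j \<Longrightarrow> a = b"
proof (induction j arbitrary: c)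
  case (Suc j)
  then obtain z z' where "(a, z) \<in> parent_arcs par ^^ j" "par c = Some z"
    "(b, z') \<in> parent_arcs par ^^ j" "par c = Some z'"
    by (auto elim!: relpow_Suc_E)
  thus ?case using Suc.IH by auto
qed simp

section \<open>Depth-first search forests\<close>

text \<open>ord is the discovery numbering of a depth-first search on U and par the parent map of its
  forest, whose roots lie in S. The last two axioms are the properties of depth-first search
  used below: an arc to a later vertex leads to a descendant, and the descendants of a vertex
  are numbered consecutively after it.\<close>

locale dfs_forest =
  fixes E :: "('a \<times> 'a) set" and U S :: "'a set"
    and ord :: "'a \<Rightarrow> nat" and par :: "'a \<Rightarrow> 'a option"
  assumes ord_inj: "inj_on ord U"
    and ord_less_card: "x \<in> U \<Longrightarrow> ord x < card U"
    and parentD: "par y = Some x \<Longrightarrow> x \<in> U \<and> y \<in> U \<and> (x, y) \<in> E \<and> ord x < ord y"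
    and root_in: "y \<in> U \<Longrightarrow> par y = None \<Longrightarrow> y \<in> S"
    and forward_arc_descendant:
      "x \<in> U \<Longrightarrow> y \<in> U \<Longrightarrow> (x, y) \<in> E \<Longrightarrow> ord x < ord y \<Longrightarrow> (x, y) \<in> (parent_arcs par)\<^sup>+"
    and descendants_interval:
      "w \<in> U \<Longrightarrow> (x, y) \<in> (parent_arcs par)\<^sup>+ \<Longrightarrow> ord x < ord w \<Longrightarrow> ord w < ord y \<Longrightarrow>
       (x, w) \<in> (parent_arcs par)\<^sup>+"
begin

lemma tree_trancl_less: "(x, y) \<in> (parent_arcs par)\<^sup>+ \<Longrightarrow> x \<in> U \<and> y \<in> U \<and> ord x < ord y"
  by (induction rule: trancl_induct) (auto dest: parentD)

lemma tree_rtrancl_le: "(x, y) \<in> (parent_arcs par)\<^sup>* \<Longrightarrow> ord x \<le> ord y"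
  by (auto dest!: rtranclD tree_trancl_less)

lemma ord_less_or_greater: "x \<in> U \<Longrightarrow> y \<in> U \<Longrightarrow> x \<noteq> y \<Longrightarrow> ord x < ord y \<or> ord y < ord x"
  using inj_onD[OF ord_inj] by (metis linorder_neqE_nat)

lemma ord_image: "finite U \<Longrightarrow> ord ` U = {..<card U}"
  using ord_less_card card_image[OF ord_inj] by (intro card_subset_eq) auto

lemma root_ancestor: "y \<in> U \<Longrightarrow> \<exists>\<rho>. par \<rho> = None \<and> (\<rho>, y) \<in> (parent_arcs par)\<^sup>*"
proof (induction "ord y" arbitrary: y rule: less_induct)
  case less
  show ?case
  proof (cases "par y")
    case (Some z)
    hence "z \<in> U" "ord z < ord y" using parentD by auto
    then obtain \<rho> where "par \<rho> = None" "(\<rho>, z) \<in> (parent_arcs par)\<^sup>*" using less by blast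
    thus ?thesis using Some by (meson parent_arcs_iff rtrancl.rtrancl_into_rtrancl)
  qed auto
qed

end

lemma dfs_forest_empty: "dfs_forest E {} S (\<lambda>_. 0) (\<lambda>_. None)"
  by unfold_locales (auto dest: tranclD)

text \<open>Grafting: r is discovered first, then the forest on U1 is searched below r (its roots
  becoming children of r), and then the forest on U2.\<close>

context
  fixes E :: "('a \<times> 'a) set" and U1 U2 S1 S :: "'a set"
    and ord1 ord2 :: "'a \<Rightarrow> nat" and par1 par2 :: "'a \<Rightarrow> 'a option" and r :: 'a
  assumes F1: "dfs_forest E U1 S1 ord1 par1" and F2: "dfs_forest E U2 S ord2 par2"
    and r_fresh: "r \<notin> U1" "r \<notin> U2" and disjoint: "U1 \<inter> U2 = {}"
begin

interpretation T1: dfs_forest E U1 S1 ord1 par1 by (fact F1)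
interpretation T2: dfs_forest E U2 S ord2 par2 by (fact F2)

definition graft_ord :: "'a \<Rightarrow> nat" where
  "graft_ord x = (if x = r then 0 else if x \<in> U1 then Suc (ord1 x) else Suc (card U1 + ord2 x))"

definition graft_par :: "'a \<Rightarrow> 'a option" where
  "graft_par x = (if x \<in> U1 then Some (case par1 x of None \<Rightarrow> r | Some y \<Rightarrow> y) else par2 x)"

lemma graft_parent_arcs:
  "parent_arcs graft_par = parent_arcs par1 \<union> {r} \<times> {y \<in> U1. par1 y = None} \<union> parent_arcs par2"
proof -
  have "graft_par y = Some x \<longleftrightarrow>
      par1 y = Some x \<or> (x = r \<and> y \<in> U1 \<and> par1 y = None) \<or> par2 y = Some x" for x y
  proof (cases "y \<in> U1")
    case True
    hence "par2 y = None" using T2.parentD disjoint by (cases "par2 y") auto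
    with True show ?thesis by (auto simp: graft_par_def split: option.splits)
  next
    case False
    hence "par1 y = None" using T1.parentD by (cases "par1 y") auto
    with False show ?thesis by (simp add: graft_par_def)
  qed
  thus ?thesis by auto
qed

lemma graft_trancl:
  "(x, y) \<in> (parent_arcs graft_par)\<^sup>+ \<longleftrightarrow>
   (x, y) \<in> (parent_arcs par1)\<^sup>+ \<or> (x = r \<and> y \<in> U1) \<or> (x, y) \<in> (parent_arcs par2)\<^sup>+"
proof
  assume "(x, y) \<in> (parent_arcs graft_par)\<^sup>+"
  thus "(x, y) \<in> (parent_arcs par1)\<^sup>+ \<or> (x = r \<and> y \<in> U1) \<or> (x, y) \<in> (parent_arcs par2)\<^sup>+"
  proof (induction rule: trancl_induct)
    case (base y)
    thus ?case by (auto simp: graft_parent_arcs)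
  next
    case (step y z)
    from step.hyps(2) consider "par1 z = Some y" | "y = r" "z \<in> U1" | "par2 z = Some y"
      by (auto simp: graft_parent_arcs)
    thus ?case
    proof cases
      case 1
      thus ?thesis using step.IH T1.parentD[of z y] T2.tree_trancl_less[of x y] disjoint
        by (auto intro: trancl_into_trancl)
    next
      case 2
      thus ?thesis using step.IH T1.tree_trancl_less T2.tree_trancl_less r_fresh by auto
    next
      case 3
      thus ?thesis using step.IH T2.parentD[of z y] T1.tree_trancl_less[of x y] disjoint
        by (auto intro: trancl_into_trancl)
    qed
  qed
next
  have sub: "parent_arcs par1 \<subseteq> parent_arcs graft_par" "parent_arcs par2 \<subseteq> parent_arcs graft_par"
    by (auto simp: graft_parent_arcs)
  have "(r, y) \<in> (parent_arcs graft_par)\<^sup>+" if y: "y \<in> U1" for y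
  proof -
    obtain \<rho> where \<rho>: "par1 \<rho> = None" "(\<rho>, y) \<in> (parent_arcs par1)\<^sup>*"
      using T1.root_ancestor[OF y] by blast
    have "\<rho> \<in> U1" using \<rho> y T1.tree_trancl_less by (auto dest: rtranclD)
    hence "(r, \<rho>) \<in> parent_arcs graft_par" using \<rho> by (simp add: graft_parent_arcs)
    moreover have "(\<rho>, y) \<in> (parent_arcs graft_par)\<^sup>*" using \<rho>(2) rtrancl_mono[OF sub(1)] by blast
    ultimately show ?thesis by (rule rtrancl_into_trancl2)
  qed
  moreover note sub
  ultimately show "(x, y) \<in> (parent_arcs par1)\<^sup>+ \<or> (x = r \<and> y \<in> U1) \<or> (x, y) \<in> (parent_arcs par2)\<^sup>+ \<Longrightarrow>
      (x, y) \<in> (parent_arcs graft_par)\<^sup>+"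
    using trancl_mono by blast
qed

lemma graft_ord_simps:
  "graft_ord r = 0" "x \<in> U1 \<Longrightarrow> graft_ord x = Suc (ord1 x)"
  "x \<in> U2 \<Longrightarrow> graft_ord x = Suc (card U1 + ord2 x)"
  using r_fresh disjoint by (auto simp: graft_ord_def)

lemma graft_ord_less_U2: "x \<in> insert r U1 \<Longrightarrow> y \<in> U2 \<Longrightarrow> graft_ord x < graft_ord y"
  using T1.ord_less_card[of x] by (auto simp: graft_ord_simps)

lemma graft_ord_pos: "x \<in> U1 \<union> U2 \<Longrightarrow> 0 < graft_ord x"
  by (auto simp: graft_ord_simps)

lemma graft_above_root: "w \<in> insert r (U1 \<union> U2) \<Longrightarrow> graft_ord x < graft_ord w \<Longrightarrow> w \<in> U1 \<union> U2"
  by (auto simp: graft_ord_simps)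

lemma graft_ord_inj: "inj_on graft_ord (insert r (U1 \<union> U2))"
proof -
  have "inj_on graft_ord U1" "inj_on graft_ord U2"
    using T1.ord_inj T2.ord_inj by (auto simp: inj_on_def graft_ord_simps)
  moreover have "graft_ord ` U1 \<inter> graft_ord ` U2 = {}"
    using graft_ord_less_U2 by (fastforce simp del: graft_ord_simps)
  moreover have "graft_ord r \<notin> graft_ord ` (U1 \<union> U2)"
    using graft_ord_pos graft_ord_simps(1) by fastforce
  ultimately show ?thesis
    using r_fresh disjoint by (auto simp: inj_on_Un Diff_triv disjoint_eq_subset_Compl)
qed

lemma graft_parentD:
  assumes S1: "\<And>y. y \<in> S1 \<Longrightarrow> (r, y) \<in> E" and "graft_par y = Some x"
  shows "x \<in> insert r (U1 \<union> U2) \<and> y \<in> insert r (U1 \<union> U2) \<and> (x, y) \<in> E \<and> graft_ord x < graft_ord y"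
proof -
  from assms(2) have "(x, y) \<in> parent_arcs graft_par" by simp
  then consider "par1 y = Some x" | "x = r" "y \<in> U1" "par1 y = None" | "par2 y = Some x"
    unfolding graft_parent_arcs by auto
  thus ?thesis
  proof cases
    case 1
    thus ?thesis using T1.parentD[OF 1] by (simp add: graft_ord_simps)
  next
    case 2
    thus ?thesis using T1.root_in[of y] S1[of y] by (simp add: graft_ord_simps)
  next
    case 3
    thus ?thesis using T2.parentD[OF 3] by (simp add: graft_ord_simps)
  qed
qed

lemma graft_forward_arc_descendant:
  assumes no_arc: "\<And>x y. x \<in> insert r U1 \<Longrightarrow> y \<in> U2 \<Longrightarrow> (x, y) \<notin> E"
    and x: "x \<in> insert r (U1 \<union> U2)" and y: "y \<in> insert r (U1 \<union> U2)"
    and xy: "(x, y) \<in> E" "graft_ord x < graft_ord y"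
  shows "(x, y) \<in> (parent_arcs graft_par)\<^sup>+"
proof (cases "x \<in> U2")
  case True
  have "y \<in> U2"
  proof (rule ccontr)
    assume "y \<notin> U2"
    hence "y \<in> insert r U1" using y by blast
    thus False using graft_ord_less_U2[OF _ True] xy(2) by (meson less_asym)
  qed
  hence "ord2 x < ord2 y" using xy(2) True by (simp add: graft_ord_simps)
  hence "(x, y) \<in> (parent_arcs par2)\<^sup>+"
    using T2.forward_arc_descendant True \<open>y \<in> U2\<close> xy(1) by blast
  thus ?thesis using graft_trancl by blast
next
  case False
  hence x1: "x \<in> insert r U1" using x by blast
  have "y \<in> U1" using y no_arc[OF x1] xy(1) graft_above_root[OF y xy(2)] by blast
  show ?thesis
  proof (cases "x = r")
    case False
    hence "x \<in> U1" using x1 by blast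
    hence "ord1 x < ord1 y" using xy(2) \<open>y \<in> U1\<close> by (simp add: graft_ord_simps)
    hence "(x, y) \<in> (parent_arcs par1)\<^sup>+"
      using T1.forward_arc_descendant \<open>x \<in> U1\<close> \<open>y \<in> U1\<close> xy(1) by blast
    thus ?thesis using graft_trancl by blast
  qed (use \<open>y \<in> U1\<close> graft_trancl in blast)
qed

lemma graft_descendants_interval:
  assumes w: "w \<in> insert r (U1 \<union> U2)" and xy: "(x, y) \<in> (parent_arcs graft_par)\<^sup>+"
    and o: "graft_ord x < graft_ord w" "graft_ord w < graft_ord y"
  shows "(x, w) \<in> (parent_arcs graft_par)\<^sup>+"
proof -
  have w12: "w \<in> U1 \<union> U2" using graft_above_root[OF w o(1)] .
  from xy consider "(x, y) \<in> (parent_arcs par1)\<^sup>+" | "x = r" "y \<in> U1" | "(x, y) \<in> (parent_arcs par2)\<^sup>+"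
    using graft_trancl by blast
  thus ?thesis
  proof cases
    case 1
    hence "x \<in> U1" "y \<in> U1" using T1.tree_trancl_less by auto
    moreover have "w \<in> U1"
      using w12 graft_ord_less_U2[of y w] o(2) \<open>y \<in> U1\<close> by (meson UnE insertI2 less_asym)
    ultimately have "ord1 x < ord1 w" "ord1 w < ord1 y" using o by (simp_all add: graft_ord_simps)
    hence "(x, w) \<in> (parent_arcs par1)\<^sup>+" using T1.descendants_interval \<open>w \<in> U1\<close> 1 by blast
    thus ?thesis using graft_trancl by blast
  next
    case 2
    hence "w \<in> U1" using w12 graft_ord_less_U2[of y w] o(2) by (meson UnE insertI2 less_asym)
    thus ?thesis using 2 graft_trancl by blast
  next
    case 3
    hence "x \<in> U2" "y \<in> U2" using T2.tree_trancl_less by auto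
    moreover have "w \<in> U2"
      using w12 graft_ord_less_U2[of w x] o(1) \<open>x \<in> U2\<close> by (meson UnE insertI2 less_asym)
    ultimately have "ord2 x < ord2 w" "ord2 w < ord2 y" using o by (simp_all add: graft_ord_simps)
    hence "(x, w) \<in> (parent_arcs par2)\<^sup>+" using T2.descendants_interval \<open>w \<in> U2\<close> 3 by blast
    thus ?thesis using graft_trancl by blast
  qed
qed

lemma graft_dfs_forest:
  assumes "finite U1" "finite U2" and S1: "\<And>y. y \<in> S1 \<Longrightarrow> (r, y) \<in> E" and "r \<in> S"
    and no_arc: "\<And>x y. x \<in> insert r U1 \<Longrightarrow> y \<in> U2 \<Longrightarrow> (x, y) \<notin> E"
  shows "dfs_forest E (insert r (U1 \<union> U2)) S graft_ord graft_par"
proof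
  let ?U = "insert r (U1 \<union> U2)"
  have "card ?U = Suc (card U1 + card U2)"
    using assms(1,2) r_fresh disjoint by (simp add: card_Un_disjoint)
  thus "x \<in> ?U \<Longrightarrow> graft_ord x < card ?U" for x
    using T1.ord_less_card[of x] T2.ord_less_card[of x] by (auto simp: graft_ord_simps)
  show "y \<in> S" if "y \<in> ?U" "graft_par y = None" for y
  proof -
    have "y \<notin> U1" using that(2) by (auto simp: graft_par_def)
    hence "y = r \<or> y \<in> U2 \<and> par2 y = None" using that by (auto simp: graft_par_def)
    thus ?thesis using T2.root_in \<open>r \<in> S\<close> by blast
  qed
qed (use graft_ord_inj graft_parentD[OF S1] graft_forward_arc_descendant[OF no_arc]
       graft_descendants_interval in blast)+

end

lemma reachable_via_successor:
  assumes "x \<in> R" and R_def: "R = {y. (r, y) \<in> (E \<inter> U \<times> U)\<^sup>*} - {r}"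
  shows "\<exists>s \<in> R. (r, s) \<in> E \<and> (s, x) \<in> (E \<inter> R \<times> R)\<^sup>*"
proof -
  have "(r, x) \<in> (E \<inter> U \<times> U)\<^sup>*" "x \<noteq> r" using assms by auto
  thus ?thesis
  proof (induction rule: rtrancl_induct)
    case (step y z)
    have z: "z \<in> R" using step.hyps step.prems R_def by (auto intro: rtrancl_into_rtrancl)
    show ?case
    proof (cases "y = r")
      case False
      then obtain s where s: "s \<in> R" "(r, s) \<in> E" "(s, y) \<in> (E \<inter> R \<times> R)\<^sup>*"
        using step.IH by blast
      have "y \<in> R" using step.hyps(1) False R_def by simp
      hence "(s, z) \<in> (E \<inter> R \<times> R)\<^sup>*" using s(3) z step.hyps(2) by (auto intro: rtrancl_into_rtrancl)
      thus ?thesis using s by blast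
    qed (use step.hyps z in auto)
  qed simp
qed

lemma reachable_avoiding_closed_set:
  assumes closed: "E `` R \<inter> U \<subseteq> R"
    and reach: "\<And>x. x \<in> U \<Longrightarrow> \<exists>s \<in> S \<inter> U. (s, x) \<in> (E \<inter> U \<times> U)\<^sup>*" and x: "x \<in> U - R"
  shows "\<exists>s \<in> S \<inter> (U - R). (s, x) \<in> (E \<inter> (U - R) \<times> (U - R))\<^sup>*"
proof -
  obtain s where s: "s \<in> S" "s \<in> U" "(s, x) \<in> (E \<inter> U \<times> U)\<^sup>*" using reach x by blast
  have "s \<notin> R \<and> (s, x) \<in> (E \<inter> (U - R) \<times> (U - R))\<^sup>*" using s(3) x
  proof (induction rule: rtrancl_induct)
    case (step y z)
    hence "y \<notin> R" using closed by blast
    thus ?case using step by (auto intro: rtrancl_into_rtrancl)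
  qed simp
  thus ?thesis using s by blast
qed

text \<open>Depth-first search: start at a root r \<in> S, search the vertices reachable from r (with
  the out-neighbours of r as roots), then continue on the rest.\<close>

lemma dfs_forest_exists:
  assumes "finite U" "\<And>x. x \<in> U \<Longrightarrow> \<exists>s \<in> S \<inter> U. (s, x) \<in> (E \<inter> U \<times> U)\<^sup>*"
  shows "\<exists>ord par. dfs_forest E U S ord par"
  using assms
proof (induction U arbitrary: S rule: finite_psubset_induct)
  case (psubset U)
  show ?case
  proof (cases "U = {}")
    case True
    thus ?thesis using dfs_forest_empty by blast
  next
    case False
    then obtain r where r: "r \<in> S" "r \<in> U" using psubset.prems by blast
    define R where "R = {y. (r, y) \<in> (E \<inter> U \<times> U)\<^sup>*}"
    have RU: "R \<subseteq> U" using r by (auto simp: R_def elim: rtranclE)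
    have rR: "r \<in> R" by (simp add: R_def)
    have closed: "E `` R \<inter> U \<subseteq> R" using RU by (auto simp: R_def intro: rtrancl_into_rtrancl)
    obtain ord1 par1 where F1: "dfs_forest E (R - {r}) {y. (r, y) \<in> E} ord1 par1"
    proof -
      have "R - {r} \<subset> U" using RU r by auto
      moreover have "\<exists>s \<in> {y. (r, y) \<in> E} \<inter> (R - {r}). (s, x) \<in> (E \<inter> (R - {r}) \<times> (R - {r}))\<^sup>*"
        if x: "x \<in> R - {r}" for x
        using reachable_via_successor[OF x, of r E U] by (auto simp: R_def)
      ultimately show thesis using psubset.IH[of "R - {r}" "{y. (r, y) \<in> E}"] that by blast
    qed
    obtain ord2 par2 where F2: "dfs_forest E (U - R) S ord2 par2"
    proof -
      have "U - R \<subset> U" using rR r by auto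
      thus thesis
        using psubset.IH[of "U - R" S] reachable_avoiding_closed_set[OF closed psubset.prems] that
        by blast
    qed
    have "U = insert r ((R - {r}) \<union> (U - R))" using RU rR by auto
    moreover have "dfs_forest E (insert r ((R - {r}) \<union> (U - R))) S
        (graft_ord (R - {r}) ord1 ord2 r) (graft_par (R - {r}) par1 par2 r)"
    proof (rule graft_dfs_forest[OF F1 F2])
      show "x \<in> insert r (R - {r}) \<Longrightarrow> y \<in> U - R \<Longrightarrow> (x, y) \<notin> E" for x y
        using closed rR by blast
    qed (use psubset.hyps r rR finite_subset[OF RU] in auto)
    ultimately show ?thesis by metis
  qed
qed

section \<open>Paths leaving a subtree meet its guard\<close>

locale dfs_of_digraph = dfs_forest E V V ord par
  for V :: "'a set" and E :: "('a \<times> 'a) set" and ord :: "'a \<Rightarrow> nat" and par :: "'a \<Rightarrow> 'a option" +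
  assumes simple: "simple_digraph V E"
begin

abbreviation tree :: "('a \<times> 'a) set" where
  "tree \<equiv> parent_arcs par"

lemma arc_in_V: "(x, y) \<in> E \<Longrightarrow> x \<in> V \<and> y \<in> V"
  using simple by (auto simp: simple_digraph_def)

lemma tree_dipath:
  assumes "(x, y) \<in> tree ^^ n"
  shows "\<exists>q. dipath E q \<and> hd q = x \<and> last q = y \<and> length q = Suc n \<and> (\<forall>z\<in>set q. (z, y) \<in> tree\<^sup>*)"
  using assms
proof (induction n arbitrary: y)
  case 0
  thus ?case by (intro exI[of _ "[x]"]) (auto simp: dipath_iff)
next
  case (Suc n)
  then obtain z where z: "(x, z) \<in> tree ^^ n" "par y = Some z" by (auto elim: relpow_Suc_E)
  then obtain q where q: "dipath E q" "hd q = x" "last q = z" "length q = Suc n"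
    "\<forall>w\<in>set q. (w, z) \<in> tree\<^sup>*" using Suc.IH by blast
  have zy: "(z, y) \<in> E" "ord z < ord y" using parentD[OF z(2)] by auto
  have "y \<notin> set q" using q(5) zy(2) tree_rtrancl_le by (meson leD)
  hence "dipath E (q @ [y])" using q(1,3) zy(1) by (auto simp: dipath_iff successively_append_iff)
  moreover have "\<forall>w\<in>set (q @ [y]). (w, y) \<in> tree\<^sup>*"
    using q(5) z(2) by (auto intro: rtrancl_into_rtrancl)
  ultimately show ?case using q by (intro exI[of _ "q @ [y]"]) (auto simp: dipath_iff)
qed

lemma arc_leaving_subtree_goes_back:
  assumes "c \<in> V" "(c, d) \<in> tree\<^sup>*" "(d, z) \<in> E" "(c, z) \<notin> tree\<^sup>*"
  shows "ord z < ord c"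
proof -
  have V: "d \<in> V" "z \<in> V" using arc_in_V[OF assms(3)] by auto
  have "(d, z) \<notin> tree\<^sup>+" using assms(2,4) by (meson rtrancl_trans trancl_into_rtrancl)
  hence dz: "ord z < ord d"
    using forward_arc_descendant[OF V assms(3)] ord_less_or_greater[OF V] assms by blast
  show ?thesis
  proof (rule ccontr)
    assume "\<not> ord z < ord c"
    hence "ord c < ord z" using ord_less_or_greater[OF V(2) assms(1)] assms(4) by fastforce
    moreover have "(c, d) \<in> tree\<^sup>+" using assms(2) calculation dz by (auto dest: rtranclD)
    ultimately have "(c, z) \<in> tree\<^sup>+" using descendants_interval V(2) dz by blast
    thus False using assms(4) by (meson trancl_into_rtrancl)
  qed
qed

definition left_of :: "'a \<Rightarrow> 'a set" where
  "left_of c = {z \<in> V. ord z < ord c \<and> (z, c) \<notin> tree\<^sup>+}"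

lemma left_of_arc_closed:
  assumes "x \<in> left_of c" "(x, z) \<in> E" "(z, c) \<notin> tree\<^sup>+" "c \<in> V"
  shows "z \<in> left_of c"
proof -
  have V: "x \<in> V" "z \<in> V" using arc_in_V[OF assms(2)] by auto
  have x: "ord x < ord c" "(x, c) \<notin> tree\<^sup>+" using assms(1) by (auto simp: left_of_def)
  have "x \<noteq> z" using assms(2) simple by (auto simp: simple_digraph_def)
  have "ord z < ord c"
  proof (cases "ord z < ord x")
    case False
    hence "ord x < ord z" using ord_less_or_greater[OF V \<open>x \<noteq> z\<close>] by simp
    hence xz: "(x, z) \<in> tree\<^sup>+" using forward_arc_descendant V assms(2) by blast
    show ?thesis
    proof (rule ccontr)
      assume "\<not> ord z < ord c"
      moreover have "z \<noteq> c" using xz x by auto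
      ultimately have "ord c < ord z" using ord_less_or_greater[OF V(2) assms(4)] by auto
      thus False using descendants_interval[OF assms(4) xz] x by blast
    qed
  qed (use x in simp)
  thus ?thesis using V assms(3) by (simp add: left_of_def)
qed

lemma walk_in_left_of:
  assumes "arcs E w" "w \<noteq> []" "hd w \<in> left_of c" "\<forall>z\<in>set w. (z, c) \<notin> tree\<^sup>+" "c \<in> V"
  shows "set w \<subseteq> left_of c"
  using assms
proof (induction w)
  case (Cons x w)
  show ?case
  proof (cases "w = []")
    case False
    hence "(x, hd w) \<in> E" "arcs E w" using Cons.prems(1) by (auto simp: successively_Cons)
    hence "hd w \<in> left_of c" using left_of_arc_closed Cons.prems False by simp
    thus ?thesis using Cons False \<open>arcs E w\<close> by simp
  qed (use Cons.prems in simp)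
qed simp

lemma left_of_not_ancestor:
  assumes "z \<in> left_of c" "(c, s) \<in> tree\<^sup>*" "c \<in> V"
  shows "(z, s) \<notin> tree\<^sup>*"
proof
  assume zs: "(z, s) \<in> tree\<^sup>*"
  have z: "z \<in> V" "ord z < ord c" "(z, c) \<notin> tree\<^sup>+" using assms(1) by (auto simp: left_of_def)
  have "ord c \<le> ord s" using tree_rtrancl_le assms(2) by blast
  hence zs': "(z, s) \<in> tree\<^sup>+" using zs z(2) by (auto dest: rtranclD)
  have "(z, c) \<in> tree\<^sup>+"
  proof (cases "s = c")
    case False
    hence "ord c < ord s" using assms(2) tree_trancl_less by (auto dest: rtranclD)
    thus ?thesis using descendants_interval[OF assms(3) zs'] z(2) by blast
  qed (use zs' in simp)
  thus False using z(3) by blast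
qed

definition guard :: "'a \<Rightarrow> 'a set" where
  "guard c = {a. \<exists>j. 1 \<le> j \<and> j < circ E \<and> (a, c) \<in> tree ^^ j}"

lemma guard_ancestor: "a \<in> guard c \<Longrightarrow> (a, c) \<in> tree\<^sup>+"
proof -
  assume "a \<in> guard c"
  then obtain j where "1 \<le> j" "(a, c) \<in> tree ^^ j" by (auto simp: guard_def)
  thus ?thesis unfolding trancl_power by (intro exI[of _ j]) simp
qed

text \<open>The tree path from a down to s, closed up by a path from s back to a outside the
  ancestors of s, is a directed cycle.\<close>

lemma tree_distance_less_circ:
  assumes "(a, s) \<in> tree ^^ n" "arcs E (s # ms @ [a])" "distinct ms" "\<forall>m\<in>set ms. (m, s) \<notin> tree\<^sup>*"
  shows "n < circ E"
proof -
  obtain q where q: "dipath E q" "hd q = a" "last q = s" "length q = Suc n"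
    "\<forall>z\<in>set q. (z, s) \<in> tree\<^sup>*"
    using tree_dipath[OF assms(1)] by blast
  have q': "q \<noteq> []" "distinct q" "arcs E q" using q(1) by (auto simp: dipath_iff)
  have "arcs E ((s # ms) @ [a])" using assms(2) by simp
  hence sms: "arcs E (s # ms)" and close: "(last (s # ms), a) \<in> E"
    unfolding successively_append_iff by simp_all
  have "set q \<inter> set ms = {}" using q(5) assms(4) by blast
  moreover have "arcs E (q @ ms)"
    using sms q' q(3) by (auto simp: successively_append_iff successively_Cons)
  moreover have "last (q @ ms) = last (s # ms)" "hd (q @ ms) = a" using q(2,3) q'(1) by auto
  hence "(last (q @ ms), hd (q @ ms)) \<in> E" using close by simp
  ultimately have "dicycle E (q @ ms)" using q' assms(3) by (intro dicycleI) auto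
  hence "length (q @ ms) \<le> circ E" using length_dicycle_le_circ[OF simple] by blast
  thus ?thesis using q(4) by simp
qed

lemma walk_into_subtree_meets_ancestor:
  assumes c: "c \<in> V" and w: "arcs E w" "w \<noteq> []" "hd w \<in> V" "ord (hd w) < ord c"
    and last: "(c, last w) \<in> tree\<^sup>*"
  shows "\<exists>ms a rest. w = ms @ a # rest \<and> (a, c) \<in> tree\<^sup>+ \<and> set ms \<subseteq> left_of c"
proof -
  have "\<exists>z\<in>set w. (z, c) \<in> tree\<^sup>+"
  proof (rule ccontr)
    assume none: "\<not> ?thesis"
    hence "hd w \<in> left_of c" using w by (simp add: left_of_def)
    hence "set w \<subseteq> left_of c" using walk_in_left_of[OF w(1,2) _ _ c] none by blast
    hence "last w \<in> left_of c" using w(2) by auto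
    thus False using tree_rtrancl_le[OF last] by (simp add: left_of_def)
  qed
  then obtain ms a rest where sp: "w = ms @ a # rest" "(a, c) \<in> tree\<^sup>+" "\<forall>m\<in>set ms. (m, c) \<notin> tree\<^sup>+"
    using split_list_first_prop[of w "\<lambda>z. (z, c) \<in> tree\<^sup>+"] by blast
  have "set ms \<subseteq> left_of c"
  proof (cases "ms = []")
    case False
    hence "hd ms = hd w" "arcs E ms" using sp(1) w(1) by (auto simp: successively_append_iff)
    moreover have "(hd ms, c) \<notin> tree\<^sup>+" using sp(3) False by simp
    ultimately have "hd ms \<in> left_of c" using w(3,4) by (simp add: left_of_def)
    thus ?thesis using walk_in_left_of[OF \<open>arcs E ms\<close> False _ _ c] sp(3) by blast
  qed simp
  thus ?thesis using sp by blast
qed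

lemma dipath_leaving_subtree_meets_guard:
  assumes c: "c \<in> V" and p: "dipath E p"
    and hd: "(c, hd p) \<in> tree\<^sup>*" and last: "(c, last p) \<in> tree\<^sup>*"
    and v: "v \<in> set p" "(c, v) \<notin> tree\<^sup>*"
  shows "\<exists>a\<in>set p. a \<in> guard c"
proof -
  have pd: "distinct p" "arcs E p" using p by (auto simp: dipath_iff)
  obtain ys x zs where sp: "p = ys @ x # zs" "(c, x) \<notin> tree\<^sup>*" "\<forall>y\<in>set ys. (c, y) \<in> tree\<^sup>*"
    using split_list_first_prop[of p "\<lambda>y. (c, y) \<notin> tree\<^sup>*"] v by blast
  have "ys \<noteq> []" using sp hd by auto
  define s where "s = last ys"
  have s: "(c, s) \<in> tree\<^sup>*" using sp(3) \<open>ys \<noteq> []\<close> by (simp add: s_def)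
  have arcs_s: "arcs E (s # x # zs)"
    using pd(2) sp(1) \<open>ys \<noteq> []\<close> by (auto simp: successively_append_iff s_def)
  hence "(s, x) \<in> E" "arcs E (x # zs)" by (simp_all add: successively_Cons)
  hence "x \<in> V" "ord x < ord c"
    using arc_leaving_subtree_goes_back[OF c s _ sp(2)] arc_in_V by blast+
  moreover have "(c, last (x # zs)) \<in> tree\<^sup>*" using last sp(1) by simp
  ultimately have "\<exists>ms a rest. x # zs = ms @ a # rest \<and> (a, c) \<in> tree\<^sup>+ \<and> set ms \<subseteq> left_of c"
    using walk_into_subtree_meets_ancestor[OF c \<open>arcs E (x # zs)\<close>] by simp
  then obtain ms a rest where
    split: "x # zs = ms @ a # rest" "(a, c) \<in> tree\<^sup>+" "set ms \<subseteq> left_of c"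
    by blast
  obtain j where j: "0 < j" "(a, c) \<in> tree ^^ j" using split(2) by (auto simp: trancl_power)
  obtain k where "(c, s) \<in> tree ^^ k" using s by (auto simp: rtrancl_power)
  hence "(a, s) \<in> tree ^^ (j + k)" using j(2) by (auto simp: relpow_add)
  moreover have "arcs E ((s # ms @ [a]) @ rest)" using arcs_s split(1) by simp
  hence "arcs E (s # ms @ [a])" by (simp only: successively_append_iff)
  moreover have "distinct ms" using pd(1) sp(1) split(1) by auto
  moreover have "\<forall>m\<in>set ms. (m, s) \<notin> tree\<^sup>*" using split(3) left_of_not_ancestor s c by blast
  ultimately have "j + k < circ E" by (rule tree_distance_less_circ)
  hence "a \<in> guard c" using j unfolding guard_def by (intro CollectI exI[of _ j]) auto
  moreover have "a \<in> set (x # zs)" using split(1) by simp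
  hence "a \<in> set p" using sp(1) by auto
  ultimately show ?thesis by blast
qed

end

section \<open>The arboreal decomposition\<close>

locale rooted_dfs_of_digraph = dfs_of_digraph V E ord par
  for V :: "'a set" and E :: "('a \<times> 'a) set" and ord :: "'a \<Rightarrow> nat" and par :: "'a \<Rightarrow> 'a option" +
  fixes r0 :: 'a
  assumes r0_in: "r0 \<in> V" and ord_r0: "ord r0 = 0"
begin

definition tree_parent :: "'a \<Rightarrow> 'a" where
  "tree_parent i = (case par i of Some x \<Rightarrow> x | None \<Rightarrow> r0)"

definition decomp_arcs :: "('a \<times> 'a) set" where
  "decomp_arcs = {(tree_parent i, i) | i. i \<in> V \<and> i \<noteq> r0}"

lemma par_r0: "par r0 = None"
  using parentD[of r0] ord_r0 by (cases "par r0") auto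

lemma tree_parent_less:
  assumes "i \<in> V" "i \<noteq> r0"
  shows "tree_parent i \<in> V" "ord (tree_parent i) < ord i"
proof -
  have "ord r0 < ord i" using ord_less_or_greater[OF r0_in assms(1)] assms(2) ord_r0 by auto
  thus "tree_parent i \<in> V" "ord (tree_parent i) < ord i"
    using parentD[of i] r0_in by (auto simp: tree_parent_def split: option.splits)
qed

lemma decomp_arcs_iff: "(j, i) \<in> decomp_arcs \<longleftrightarrow> i \<in> V \<and> i \<noteq> r0 \<and> j = tree_parent i"
  unfolding decomp_arcs_def by auto

lemma decomp_arcs_trancl_less: "(x, y) \<in> decomp_arcs\<^sup>+ \<Longrightarrow> ord x < ord y"
proof (induction rule: trancl_induct)
  case (base y)
  thus ?case using tree_parent_less by (auto simp: decomp_arcs_iff)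
next
  case (step y z)
  thus ?case using tree_parent_less[of z] by (fastforce simp: decomp_arcs_iff)
qed

lemma tree_subset_decomp_arcs: "tree \<subseteq> decomp_arcs"
proof
  fix e assume "e \<in> tree"
  then obtain x y where e: "e = (x, y)" "par y = Some x" by (cases e) auto
  hence "y \<in> V" "y \<noteq> r0" using parentD[OF e(2)] par_r0 by auto
  thus "e \<in> decomp_arcs" using e by (simp add: decomp_arcs_iff tree_parent_def)
qed

lemma decomp_arcs_trancl_tree:
  assumes "(c, k) \<in> decomp_arcs\<^sup>+" "c \<noteq> r0"
  shows "(c, k) \<in> tree\<^sup>+"
  using assms(1)
proof (induction rule: trancl_induct)
  case (base y)
  hence "par y = Some c" using assms(2) by (auto simp: decomp_arcs_iff tree_parent_def split: option.splits)
  thus ?case by auto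
next
  case (step y z)
  have "par y \<noteq> None" using step.IH by (auto dest: tranclD2)
  hence "y \<noteq> r0" using par_r0 by auto
  hence "par z = Some y" using step.hyps(2) \<open>par y \<noteq> None\<close>
    by (auto simp: decomp_arcs_iff tree_parent_def split: option.splits)
  thus ?case using step.IH by (auto intro: trancl_into_trancl)
qed

lemma decomp_walk_exists: "i \<in> V \<Longrightarrow> \<exists>p. diwalk decomp_arcs p \<and> hd p = r0 \<and> last p = i"
proof (induction "ord i" arbitrary: i rule: less_induct)
  case less
  show ?case
  proof (cases "i = r0")
    case True
    thus ?thesis by (intro exI[of _ "[r0]"]) (auto simp: diwalk_iff)
  next
    case False
    then obtain p where p: "diwalk decomp_arcs p" "hd p = r0" "last p = tree_parent i"
      using less tree_parent_less[OF less.prems False] by blast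
    have "(tree_parent i, i) \<in> decomp_arcs" using less.prems False by (simp add: decomp_arcs_iff)
    hence "diwalk decomp_arcs (p @ [i])" using p by (auto simp: diwalk_iff successively_append_iff)
    thus ?thesis using p by (intro exI[of _ "p @ [i]"]) (auto simp: diwalk_iff)
  qed
qed

lemma decomp_walk_unique:
  "diwalk decomp_arcs p \<Longrightarrow> hd p = r0 \<Longrightarrow> diwalk decomp_arcs q \<Longrightarrow> hd q = r0 \<Longrightarrow>
   last p = last q \<Longrightarrow> p = q"
proof (induction p arbitrary: q rule: rev_induct)
  case (snoc x p')
  obtain q' where q: "q = q' @ [x]" using snoc.prems(3,5) by (cases q rule: rev_cases) (auto simp: diwalk_iff)
  show ?case
  proof (cases "p' = []")
    case True
    hence "x = r0" using snoc.prems(2) by simp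
    have "q' = []"
    proof (rule ccontr)
      assume "q' \<noteq> []"
      hence "(last q', x) \<in> decomp_arcs" using snoc.prems(3) q by (auto simp: diwalk_iff successively_append_iff)
      thus False using \<open>x = r0\<close> by (simp add: decomp_arcs_iff)
    qed
    thus ?thesis using True q by simp
  next
    case False
    have p': "(last p', x) \<in> decomp_arcs" "arcs decomp_arcs p'" using snoc.prems(1) False
      by (auto simp: diwalk_iff successively_append_iff)
    hence "x \<noteq> r0" by (auto simp: decomp_arcs_iff)
    hence "q' \<noteq> []" using q snoc.prems(4) by auto
    hence "(last q', x) \<in> decomp_arcs" "arcs decomp_arcs q'" using snoc.prems(3) q
      by (auto simp: diwalk_iff successively_append_iff)
    hence "p' = q'" using snoc.IH[of q'] p' False \<open>q' \<noteq> []\<close> snoc.prems(2,4) q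
      by (auto simp: diwalk_iff decomp_arcs_iff)
    thus ?thesis using q by simp
  qed
qed (simp add: diwalk_iff)

lemma arborescence_decomp_arcs: "arborescence V decomp_arcs r0"
  unfolding arborescence_def
proof (intro conjI ballI)
  show "finite V" using simple by (simp add: simple_digraph_def)
  show "decomp_arcs \<subseteq> V \<times> V" using tree_parent_less by (auto simp: decomp_arcs_def)
  show "acyclic decomp_arcs" unfolding acyclic_def using decomp_arcs_trancl_less by blast
  show "{i \<in> V. \<forall>j. (j, i) \<notin> decomp_arcs} = {r0}" using r0_in by (auto simp: decomp_arcs_iff)
  show "\<exists>!p. diwalk decomp_arcs p \<and> hd p = r0 \<and> last p = i" if "i \<in> V" for i
    using decomp_walk_exists[OF that] decomp_walk_unique by metis
qed (rule r0_in)

definition decomp_guard :: "'a \<times> 'a \<Rightarrow> 'a set" where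
  "decomp_guard e = guard (snd e)"

lemma guard_subset_V: "guard c \<subseteq> V"
  using guard_ancestor tree_trancl_less by blast

lemma card_guard: "card (guard c) \<le> circ E - 1"
proof -
  define anc where "anc j = (SOME a. (a, c) \<in> tree ^^ j)" for j
  have "guard c \<subseteq> anc ` {1..<circ E}"
  proof
    fix a assume "a \<in> guard c"
    then obtain j where j: "1 \<le> j" "j < circ E" "(a, c) \<in> tree ^^ j" by (auto simp: guard_def)
    hence "(anc j, c) \<in> tree ^^ j" unfolding anc_def by (metis someI)
    hence "a = anc j" by (rule parent_arcs_relpow_unique[OF j(3)])
    thus "a \<in> anc ` {1..<circ E}" using j by auto
  qed
  hence "card (guard c) \<le> card (anc ` {1..<circ E})" by (intro card_mono) auto
  also have "\<dots> \<le> card {1..<circ E}" by (rule card_image_le) auto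
  finally show ?thesis by simp
qed

lemma guard_tree_parent:
  assumes "i \<in> V" "i \<noteq> r0"
  shows "guard i \<subseteq> insert (tree_parent i) (guard (tree_parent i))"
proof
  fix a assume "a \<in> guard i"
  then obtain j where j: "1 \<le> j" "j < circ E" "(a, i) \<in> tree ^^ j" by (auto simp: guard_def)
  moreover have "Suc (j - 1) = j" using j(1) by simp
  ultimately obtain z where z: "(a, z) \<in> tree ^^ (j - 1)" "par i = Some z"
    by (metis relpow_Suc_E parent_arcs_iff)
  have "tree_parent i = z" using z(2) by (simp add: tree_parent_def)
  show "a \<in> insert (tree_parent i) (guard (tree_parent i))"
  proof (cases "j = 1")
    case True
    thus ?thesis using z(1) \<open>tree_parent i = z\<close> by simp
  next
    case False
    hence "a \<in> guard z" unfolding guard_def using j z(1) by (intro CollectI exI[of _ "j - 1"]) auto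
    thus ?thesis using \<open>tree_parent i = z\<close> by simp
  qed
qed

lemma bag_card:
  assumes "c \<in> V"
  shows "card ({c} \<union> A_sim decomp_arcs decomp_guard c) \<le> circ E"
proof -
  have "A_sim decomp_arcs decomp_guard c \<subseteq> insert c (guard c)"
  proof
    fix a assume "a \<in> A_sim decomp_arcs decomp_guard c"
    then obtain b where b: "b \<in> V" "b \<noteq> r0" "tree_parent b = c \<or> b = c" "a \<in> guard b"
      unfolding A_sim_def decomp_guard_def by (auto simp: decomp_arcs_def)
    thus "a \<in> insert c (guard c)" using guard_tree_parent[of b] by auto
  qed
  hence "card ({c} \<union> A_sim decomp_arcs decomp_guard c) \<le> card (insert c (guard c))"
    using finite_subset[OF guard_subset_V] simple by (intro card_mono) (auto simp: simple_digraph_def)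
  also have "\<dots> \<le> circ E" by (rule card_insert_le_m1[OF circ_pos[OF simple] card_guard])
  finally show ?thesis .
qed

lemma W_succ_decomp_arcs:
  assumes "c \<in> V" "c \<noteq> r0"
  shows "W_succ V decomp_arcs (\<lambda>i. {i}) (tree_parent c, c) = {y. (c, y) \<in> tree\<^sup>*}"
proof -
  have "(c, y) \<in> decomp_arcs\<^sup>+ \<longleftrightarrow> (c, y) \<in> tree\<^sup>+" for y
    using decomp_arcs_trancl_tree[of c y] assms trancl_mono[OF _ tree_subset_decomp_arcs] by blast
  thus ?thesis unfolding W_succ_def using assms tree_trancl_less by (auto dest: rtranclD)
qed

lemma normal_guard_subtree:
  assumes "c \<in> V"
  shows "normal V E (guard c) {y. (c, y) \<in> tree\<^sup>*}"
  unfolding normal_def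
proof (intro conjI notI)
  show "{y. (c, y) \<in> tree\<^sup>*} \<inter> guard c = {}"
  proof (rule equals0I)
    fix y assume y: "y \<in> {y. (c, y) \<in> tree\<^sup>*} \<inter> guard c"
    hence "ord y < ord c" using guard_ancestor tree_trancl_less by blast
    moreover have "ord c \<le> ord y" using y tree_rtrancl_le by blast
    ultimately show False by simp
  qed
next
  assume "\<exists>p. dipath E p \<and> set p \<subseteq> V - guard c \<and> hd p \<in> {y. (c, y) \<in> tree\<^sup>*} \<and>
    last p \<in> {y. (c, y) \<in> tree\<^sup>*} \<and> (\<exists>v\<in>set p. v \<notin> {y. (c, y) \<in> tree\<^sup>*} \<union> guard c)"
  then obtain p v where "dipath E p" "set p \<inter> guard c = {}" "(c, hd p) \<in> tree\<^sup>*"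
    "(c, last p) \<in> tree\<^sup>*" "v \<in> set p" "(c, v) \<notin> tree\<^sup>*" by auto
  thus False using dipath_leaving_subtree_meets_guard[OF assms] by blast
qed

theorem arboreal_decomposition_guards:
  "arboreal_decomposition V E V decomp_arcs r0 (\<lambda>i. {i}) decomp_guard"
  unfolding arboreal_decomposition_def
proof (intro conjI ballI)
  show "arborescence V decomp_arcs r0" by (rule arborescence_decomp_arcs)
  show "decomp_guard e \<subseteq> V" for e using guard_subset_V by (simp add: decomp_guard_def)
  fix e assume "e \<in> decomp_arcs"
  then obtain c where c: "e = (tree_parent c, c)" "c \<in> V" "c \<noteq> r0" by (auto simp: decomp_arcs_def)
  show "normal V E (decomp_guard e) (W_succ V decomp_arcs (\<lambda>i. {i}) e)"
    unfolding c(1) W_succ_decomp_arcs[OF c(2,3)] decomp_guard_def using normal_guard_subtree[OF c(2)] by simp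
qed auto

end

section \<open>Relabelling the decomposition tree\<close>

context
  fixes h :: "'b \<Rightarrow> 'c" and N :: "'b set" and F :: "('b \<times> 'b) set"
  assumes inj: "inj_on h N" and FN: "F \<subseteq> N \<times> N"
begin

lemma relabelled_arcD:
  assumes "(u, v) \<in> map_prod h h ` F"
  shows "u \<in> h ` N \<and> v \<in> h ` N \<and> (inv_into N h u, inv_into N h v) \<in> F"
  using assms FN inj by auto

lemma relabelled_trancl_iff:
  assumes "x \<in> N" "y \<in> N"
  shows "(h x, h y) \<in> (map_prod h h ` F)\<^sup>+ \<longleftrightarrow> (x, y) \<in> F\<^sup>+"
proof
  have "(inv_into N h u, inv_into N h v) \<in> F\<^sup>+" if "(u, v) \<in> (map_prod h h ` F)\<^sup>+" for u v
    using that
  proof (induction rule: trancl_induct)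
    case (base v)
    thus ?case using relabelled_arcD by blast
  next
    case (step v w)
    thus ?case using relabelled_arcD[OF step.hyps(2)] by (meson trancl_into_trancl)
  qed
  thus "(h x, h y) \<in> (map_prod h h ` F)\<^sup>+ \<Longrightarrow> (x, y) \<in> F\<^sup>+" using assms inj by force
next
  show "(x, y) \<in> F\<^sup>+ \<Longrightarrow> (h x, h y) \<in> (map_prod h h ` F)\<^sup>+"
    by (induction rule: trancl_induct) (auto intro: trancl_into_trancl)
qed

lemma relabelled_has_in_arc:
  assumes "x \<in> N"
  shows "(\<exists>j. (j, h x) \<in> map_prod h h ` F) \<longleftrightarrow> (\<exists>j. (j, x) \<in> F)"
  using assms FN inj by (force dest: inj_onD)

lemma relabelled_roots:
  assumes roots: "{i \<in> N. \<forall>j. (j, i) \<notin> F} = {r}" and rN: "r \<in> N"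
  shows "{i \<in> h ` N. \<forall>j. (j, i) \<notin> map_prod h h ` F} = {h r}"
proof (intro equalityI subsetI)
  fix i assume "i \<in> {i \<in> h ` N. \<forall>j. (j, i) \<notin> map_prod h h ` F}"
  then obtain x where x: "x \<in> N" "i = h x" "\<forall>j. (j, h x) \<notin> map_prod h h ` F" by blast
  hence "x \<in> {i \<in> N. \<forall>j. (j, i) \<notin> F}" using relabelled_has_in_arc[OF x(1)] by blast
  thus "i \<in> {h r}" using roots x(2) by simp
next
  fix i assume "i \<in> {h r}"
  moreover have "\<forall>j. (j, r) \<notin> F" using roots by blast
  ultimately show "i \<in> {i \<in> h ` N. \<forall>j. (j, i) \<notin> map_prod h h ` F}"
    using relabelled_has_in_arc[OF rN] rN by auto
qed

lemma arcs_relabel: "arcs F p \<Longrightarrow> arcs (map_prod h h ` F) (map h p)"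
  unfolding successively_map by (auto elim: successively_mono)

lemma arcs_unrelabel: "arcs (map_prod h h ` F) q \<Longrightarrow> arcs F (map (inv_into N h) q)"
  unfolding successively_map by (erule successively_mono) (meson relabelled_arcD)

lemma arborescence_relabel:
  assumes arb: "arborescence N F r"
  shows "arborescence (h ` N) (map_prod h h ` F) (h r)"
  unfolding arborescence_def
proof (intro conjI ballI)
  let ?F = "map_prod h h ` F" and ?g = "inv_into N h"
  have rN: "r \<in> N" and roots: "{i \<in> N. \<forall>j. (j, i) \<notin> F} = {r}" and fin: "finite N"
    using arb by (auto simp: arborescence_def)
  show "finite (h ` N)" using fin by simp
  show F': "?F \<subseteq> h ` N \<times> h ` N" using FN by auto
  show "acyclic ?F"
  proof -
    have "(h x, h x) \<notin> ?F\<^sup>+" if "x \<in> N" for x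
      using relabelled_trancl_iff[OF that that] arb by (auto simp: arborescence_def acyclic_def)
    moreover have "?F\<^sup>+ \<subseteq> h ` N \<times> h ` N" by (rule trancl_subset_Sigma[OF F'])
    ultimately show ?thesis unfolding acyclic_def by blast
  qed
  show "{i \<in> h ` N. \<forall>j. (j, i) \<notin> ?F} = {h r}" by (rule relabelled_roots[OF roots rN])
  show "h r \<in> h ` N" using rN by simp
  fix i' assume "i' \<in> h ` N"
  then obtain i where i: "i \<in> N" "i' = h i" by blast
  obtain p where p: "diwalk F p" "hd p = r" "last p = i"
    and p_unique: "\<And>q. diwalk F q \<and> hd q = r \<and> last q = i \<Longrightarrow> q = p"
    using arb i(1) unfolding arborescence_def by metis
  show "\<exists>!q. diwalk ?F q \<and> hd q = h r \<and> last q = i'"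
  proof
    show "diwalk ?F (map h p) \<and> hd (map h p) = h r \<and> last (map h p) = i'"
      using p i arcs_relabel by (auto simp: diwalk_iff hd_map last_map)
  next
    fix q assume q: "diwalk ?F q \<and> hd q = h r \<and> last q = i'"
    hence qN: "set q \<subseteq> h ` N" using arcs_set_subset[OF _ F'] rN by (auto simp: diwalk_iff)
    have "diwalk F (map ?g q) \<and> hd (map ?g q) = r \<and> last (map ?g q) = i"
      using q i rN inj arcs_unrelabel by (auto simp: diwalk_iff hd_map last_map)
    hence "map h (map ?g q) = map h p" using p_unique by simp
    moreover have "map h (map ?g q) = q" using qN by (induction q) (auto simp: f_inv_into_f)
    ultimately show "q = map h p" by simp
  qed
qed

lemma W_succ_relabel:
  assumes "b \<in> N"
  shows "W_succ (h ` N) (map_prod h h ` F) (W \<circ> inv_into N h) (h a, h b) = W_succ N F W (a, b)"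
proof -
  have "{k \<in> h ` N. k = h b \<or> (h b, k) \<in> (map_prod h h ` F)\<^sup>+} = h ` {k \<in> N. k = b \<or> (b, k) \<in> F\<^sup>+}"
    using relabelled_trancl_iff assms inj_onD[OF inj] by auto
  thus ?thesis unfolding W_succ_def using inj by simp
qed

lemma A_sim_relabel:
  assumes "i \<in> N"
  shows "A_sim (map_prod h h ` F) (A \<circ> map_prod (inv_into N h) (inv_into N h)) (h i) = A_sim F A i"
proof -
  have "{e \<in> map_prod h h ` F. fst e = h i \<or> snd e = h i} = map_prod h h ` {e \<in> F. fst e = i \<or> snd e = i}"
    using FN assms inj_onD[OF inj] by force
  moreover have "map_prod (inv_into N h) (inv_into N h) (map_prod h h e) = e" if "e \<in> F" for e
    using that FN inj by (cases e) auto
  ultimately show ?thesis unfolding A_sim_def by simp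
qed

lemma bag_relabel:
  assumes "i \<in> N"
  shows "(W \<circ> inv_into N h) (h i) \<union> A_sim (map_prod h h ` F) (A \<circ> map_prod (inv_into N h) (inv_into N h)) (h i)
    = W i \<union> A_sim F A i"
  using A_sim_relabel[OF assms, of A] inj assms by simp

end

lemma arboreal_decomposition_relabel:
  assumes inj: "inj_on h N" and ad: "arboreal_decomposition V E N F r W A"
  shows "arboreal_decomposition V E (h ` N) (map_prod h h ` F) (h r)
           (W \<circ> inv_into N h) (A \<circ> map_prod (inv_into N h) (inv_into N h))"
  unfolding arboreal_decomposition_def
proof (intro conjI ballI impI)
  have arb: "arborescence N F r" using ad by (simp add: arboreal_decomposition_def)
  hence FN: "F \<subseteq> N \<times> N" by (simp add: arborescence_def)
  show "arborescence (h ` N) (map_prod h h ` F) (h r)" by (rule arborescence_relabel[OF inj FN arb])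
  show "(W \<circ> inv_into N h) i \<noteq> {}" "(W \<circ> inv_into N h) i \<subseteq> V" if "i \<in> h ` N" for i
    using ad that inv_into_into[OF that] by (auto simp: arboreal_decomposition_def)
  show "(W \<circ> inv_into N h) i \<inter> (W \<circ> inv_into N h) j = {}" if "i \<in> h ` N" "j \<in> h ` N" "i \<noteq> j" for i j
    using ad that inv_into_into[OF that(1)] inv_into_into[OF that(2)] f_inv_into_f
    unfolding arboreal_decomposition_def comp_def by metis
  show "(\<Union>i\<in>h ` N. (W \<circ> inv_into N h) i) = V" using ad inj by (simp add: arboreal_decomposition_def)
  fix e assume "e \<in> map_prod h h ` F"
  then obtain a b where ab: "(a, b) \<in> F" "e = (h a, h b)" by auto
  hence "a \<in> N" "b \<in> N" using FN by auto
  have "(A \<circ> map_prod (inv_into N h) (inv_into N h)) e = A (a, b)"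
    using ab(2) inj \<open>a \<in> N\<close> \<open>b \<in> N\<close> by simp
  moreover have "W_succ (h ` N) (map_prod h h ` F) (W \<circ> inv_into N h) e = W_succ N F W (a, b)"
    using ab(2) W_succ_relabel[OF inj FN \<open>b \<in> N\<close>] by simp
  moreover have "A (a, b) \<subseteq> V" "normal V E (A (a, b)) (W_succ N F W (a, b))"
    using ad ab(1) unfolding arboreal_decomposition_def by blast+
  ultimately show "(A \<circ> map_prod (inv_into N h) (inv_into N h)) e \<subseteq> V"
    "normal V E ((A \<circ> map_prod (inv_into N h) (inv_into N h)) e)
       (W_succ (h ` N) (map_prod h h ` F) (W \<circ> inv_into N h) e)"
    by simp_all
qed

lemma dtw_le:
  assumes "arboreal_decomposition V E (N :: nat set) F r W A" "\<And>i. i \<in> N \<Longrightarrow> card (W i \<union> A_sim F A i) \<le> Suc k"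
  shows "dtw V E \<le> k"
proof -
  have "finite N" "N \<noteq> {}" using assms(1) by (auto simp: arboreal_decomposition_def arborescence_def)
  hence "Max {card (W i \<union> A_sim F A i) | i. i \<in> N} \<le> Suc k" using assms(2) by (intro Max.boundedI) auto
  hence "decomp_width N F W A \<le> k" by (simp add: decomp_width_def)
  moreover have "dtw V E \<le> decomp_width N F W A" unfolding dtw_def using assms(1) by (intro Least_le) blast
  ultimately show ?thesis by simp
qed

theorem mainTheorem1:
  fixes V :: "'a set" and E :: "('a \<times> 'a) set"
  assumes "simple_digraph V E" and "V \<noteq> {}"
  shows "dtw V E \<le> circ E + 1"
proof -
  have finV: "finite V" using assms(1) by (simp add: simple_digraph_def)
  obtain ord par where F: "dfs_forest E V V ord par"
    using dfs_forest_exists[OF finV, of V E] by blast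
  interpret dfs_of_digraph V E ord par
    using F assms(1) by (intro dfs_of_digraph.intro dfs_of_digraph_axioms.intro)
  obtain r0 where "r0 \<in> V" "ord r0 = 0"
    using ord_image[OF finV] assms(2) finV by (metis card_gt_0_iff imageE lessThan_iff)
  then interpret rooted_dfs_of_digraph V E ord par r0 by unfold_locales
  let ?g = "inv_into V ord"
  have FN: "decomp_arcs \<subseteq> V \<times> V" using arborescence_decomp_arcs by (simp add: arborescence_def)
  have "card (((\<lambda>i. {i}) \<circ> ?g) i \<union> A_sim (map_prod ord ord ` decomp_arcs) (decomp_guard \<circ> map_prod ?g ?g) i)
      \<le> Suc (circ E + 1)" if i: "i \<in> ord ` V" for i
  proof -
    obtain c where "c \<in> V" "i = ord c" using i by blast
    thus ?thesis using bag_relabel[OF ord_inj FN, of c "\<lambda>i. {i}" decomp_guard] bag_card[of c] by simp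
  qed
  with arboreal_decomposition_relabel[OF ord_inj arboreal_decomposition_guards]
  show ?thesis by (rule dtw_le)
qed

end
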